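(* Let $n\ge 1$, $m\ge 2$, $N=\{1,\dots,n\}$, $M=\{1,\dots,m\}$, $R\in\mathbb{R}$, $b\in\mathbb{R}^n$, and bounds $l,u\in\mathbb{R}^{n\times m}$ with $l_{i,1}\le u_{i,1}<l_{i,2}\le u_{i,2}<\dots<l_{i,m}\le u_{i,m}$ for every $i\in N$. Let $K=(K_1,\dots,K_{m-1})\in\mathbb{Z}^{m-1}$ with $0\le K_1\le\dots\le K_{m-1}<n$, and let $K^+=(K_1,\dots,K_{m-2},K_{m-1}+1)$. For such a partition vector $K$ (with the conventions $K_0=0$, $K_m=n$) let $j^K(i)$ be the unique $j\in M$ with $K_{j-1}<i\le K_j$, and for $\lambda\in\mathbb{R}$ define \[ x_i(K,\lambda)=\begin{cases} l_{i,j^K(i)} & \text{if } \lambda\le l_{i,j^K(i)}+b_i,\\ \lambda-b_i & \text{if } l_{i,j^K(i)}+b_i\le\lambda\le u_{i,j^K(i)}+b_i,\\ u_{i,j^K(i)} & \text{if } \lambda\ge u_{i,j^K(i)}+b_i,\end{cases}\qquad z(K,\lambda)=\sum_{i\in N}x_i(K,\lambda). \] Suppose $\lambda^K,\lambda^{K^+}\in\mathbb{R}$ satisfy $z(K,\lambda^K)=R$ and $z(K^+,\lambda^{K^+})=R$. Then $\lambda^{K^+}>\lambda^K$.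
   Context: $x(K,\lambda)$ is the optimal solution of the Lagrangian relaxation of the quadratic problem $Q(K)$: $\min\sum_i\frac12(x_i+b_i)^2$ s.t. $\sum_i x_i=R$, $x_i\in[l_{i,j^K(i)},u_{i,j^K(i)}]$; a value $\lambda^K$ with $z(K,\lambda^K)=R$ is an optimal Lagrange multiplier of $Q(K)$, which exists when $Q(K)$ is feasible. *)

theory Defs
  imports Complex_Main
begin

text \<open>Partition vector K = (K_1,...,K_{m-1}) stored as a function on indices 1..m-1,
extended with the conventions K_0 = 0 and K_m = n.\<close>
definition Kext :: "nat \<Rightarrow> nat \<Rightarrow> (nat \<Rightarrow> nat) \<Rightarrow> nat \<Rightarrow> nat" where
  "Kext n m K j = (if j = 0 then 0 else if j = m then n else K j)"

definition jK :: "nat \<Rightarrow> nat \<Rightarrow> (nat \<Rightarrow> nat) \<Rightarrow> nat \<Rightarrow> nat" where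
  "jK n m K i = (THE j. j \<in> {1..m} \<and> Kext n m K (j - 1) < i \<and> i \<le> Kext n m K j)"

definition xK :: "(nat \<Rightarrow> nat \<Rightarrow> real) \<Rightarrow> (nat \<Rightarrow> nat \<Rightarrow> real) \<Rightarrow> (nat \<Rightarrow> real)
    \<Rightarrow> nat \<Rightarrow> nat \<Rightarrow> (nat \<Rightarrow> nat) \<Rightarrow> real \<Rightarrow> nat \<Rightarrow> real" where
  "xK l u b n m K lam i =
     (let j = jK n m K i in
      if lam \<le> l i j + b i then l i j
      else if lam \<le> u i j + b i then lam - b i
      else u i j)"

definition zK :: "(nat \<Rightarrow> nat \<Rightarrow> real) \<Rightarrow> (nat \<Rightarrow> nat \<Rightarrow> real) \<Rightarrow> (nat \<Rightarrow> real)
    \<Rightarrow> nat \<Rightarrow> nat \<Rightarrow> (nat \<Rightarrow> nat) \<Rightarrow> real \<Rightarrow> real" where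
  "zK l u b n m K lam = (\<Sum>i\<in>{1..n}. xK l u b n m K lam i)"

definition Kplus :: "nat \<Rightarrow> (nat \<Rightarrow> nat) \<Rightarrow> nat \<Rightarrow> nat" where
  "Kplus m K = K(m - 1 := K (m - 1) + 1)"

end

theory Submission
  imports Defs
begin

text \<open>Passing from K to K^+ changes the block of exactly one index, i0 = K_{m-1} + 1, which
moves from block m down to block m-1; every other coordinate x_i(K, -) stays the same
nondecreasing clamp of lambda. If lambda^{K^+} <= lambda^K, each unchanged coordinate of
x(K^+, lambda^{K^+}) is at most the corresponding coordinate of x(K, lambda^K), while
x_{i0}(K^+, lambda^{K^+}) <= u_{i0,m-1} < l_{i0,m} <= x_{i0}(K, lambda^K). Hence
z(K^+, lambda^{K^+}) < z(K, lambda^K), so the two sums cannot both equal R.\<close>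

lemma Kext_le_Suc:
  assumes "\<forall>j\<in>{1..<m - 1}. K j \<le> K (j + 1)" and "K (m - 1) \<le> n" and "j < m"
  shows "Kext n m K j \<le> Kext n m K (Suc j)"
  using assms by (auto simp: Kext_def)

lemma mono_on_Kext:
  assumes "\<forall>j\<in>{1..<m - 1}. K j \<le> K (j + 1)" and "K (m - 1) \<le> n"
  shows "mono_on {0..m} (Kext n m K)"
proof (rule mono_onI)
  fix a c :: nat
  assume "a \<in> {0..m}" "c \<in> {0..m}" "a \<le> c"
  show "Kext n m K a \<le> Kext n m K c"
    by (rule lift_Suc_mono_le_ivl[of "{..<m}"])
      (use \<open>a \<le> c\<close> \<open>c \<in> {0..m}\<close> Kext_le_Suc[OF assms] in auto)
qed

lemma Kplus_chain:
  assumes "\<forall>j\<in>{1..<m - 1}. K j \<le> K (j + 1)"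
  shows "\<forall>j\<in>{1..<m - 1}. Kplus m K j \<le> Kplus m K (j + 1)"
  using assms by (auto simp: Kplus_def)

lemma block_index_unique:
  fixes F :: "nat \<Rightarrow> 'a::linorder"
  assumes "mono_on {0..m} F"
    and "j \<in> {1..m}" "F (j - 1) < i" "i \<le> F j"
    and "j' \<in> {1..m}" "F (j' - 1) < i" "i \<le> F j'"
  shows "j = j'"
proof -
  have not_less: "\<not> a < c" if "a \<in> {1..m}" "i \<le> F a" "c \<in> {1..m}" "F (c - 1) < i" for a c
  proof
    assume "a < c"
    then have "F a \<le> F (c - 1)" using that by (intro mono_onD[OF assms(1)]) auto
    with that show False by simp
  qed
  show ?thesis using not_less assms by (meson linorder_neqE_nat)
qed

lemma block_index_exists:
  fixes F :: "nat \<Rightarrow> 'a::linorder"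
  assumes "F 0 < i" and "i \<le> F m"
  shows "\<exists>j\<in>{1..m}. F (j - 1) < i \<and> i \<le> F j"
  using assms
proof (induction m)
  case 0
  then show ?case by simp
next
  case (Suc m)
  show ?case
  proof (cases "i \<le> F m")
    case True
    with Suc show ?thesis by fastforce
  next
    case False
    with Suc.prems show ?thesis by force
  qed
qed

lemma jK_eqI:
  assumes "mono_on {0..m} (Kext n m K)"
    and "j \<in> {1..m}" "Kext n m K (j - 1) < i" "i \<le> Kext n m K j"
  shows "jK n m K i = j"
  unfolding jK_def
  by (rule the_equality) (use assms block_index_unique[OF assms(1)] in blast)+

lemma jK_mem:
  assumes "mono_on {0..m} (Kext n m K)" and "1 \<le> m" and "i \<in> {1..n}"
  shows "jK n m K i \<in> {1..m}"
proof -
  obtain j where "j \<in> {1..m}" "Kext n m K (j - 1) < i" "i \<le> Kext n m K j"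
    using block_index_exists[of "Kext n m K" i m] assms by (auto simp: Kext_def)
  with jK_eqI[OF assms(1)] show ?thesis by simp
qed

lemma jK_Kplus_eq:
  assumes "i \<noteq> K (m - 1) + 1"
  shows "jK n m (Kplus m K) i = jK n m K i"
proof -
  have "(Kext n m (Kplus m K) k < i) = (Kext n m K k < i)"
    and "(i \<le> Kext n m (Kplus m K) k) = (i \<le> Kext n m K k)" for k
    using assms by (auto simp: Kext_def Kplus_def)
  then show ?thesis by (simp add: jK_def)
qed

lemma jK_last:
  assumes "\<forall>j\<in>{1..<m - 1}. K j \<le> K (j + 1)" and "2 \<le> m" and "K (m - 1) < n"
  shows "jK n m K (K (m - 1) + 1) = m"
  by (rule jK_eqI[OF mono_on_Kext[OF assms(1)]]) (use assms in \<open>auto simp: Kext_def\<close>)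

lemma jK_Kplus_last:
  assumes "\<forall>j\<in>{1..<m - 1}. K j \<le> K (j + 1)" and "2 \<le> m" and "K (m - 1) < n"
  shows "jK n m (Kplus m K) (K (m - 1) + 1) = m - 1"
proof (rule jK_eqI)
  show "mono_on {0..m} (Kext n m (Kplus m K))"
    by (rule mono_on_Kext[OF Kplus_chain[OF assms(1)]]) (use assms in \<open>simp add: Kplus_def\<close>)
  have "Kext n m K (m - 1 - 1) \<le> Kext n m K (m - 1)"
    using assms by (intro mono_onD[OF mono_on_Kext[OF assms(1)]]) auto
  then show "Kext n m (Kplus m K) (m - 1 - 1) < K (m - 1) + 1"
    using assms by (auto simp: Kext_def Kplus_def split: if_splits)
qed (use assms in \<open>auto simp: Kext_def Kplus_def\<close>)

lemma xK_le_upper: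
  assumes "jK n m K i = j" and "l i j \<le> u i j"
  shows "xK l u b n m K lam i \<le> u i j"
  using assms by (auto simp: xK_def)

lemma xK_ge_lower:
  assumes "jK n m K i = j" and "l i j \<le> u i j"
  shows "l i j \<le> xK l u b n m K lam i"
  using assms by (auto simp: xK_def)

lemma xK_mono:
  assumes "jK n m K i = j" and "l i j \<le> u i j" and "lam \<le> lam'"
  shows "xK l u b n m K lam i \<le> xK l u b n m K lam' i"
  using assms by (auto simp: xK_def)

lemma xK_Kplus_eq:
  assumes "i \<noteq> K (m - 1) + 1"
  shows "xK l u b n m (Kplus m K) lam i = xK l u b n m K lam i"
  using assms by (simp add: xK_def jK_Kplus_eq)

lemma xK_Kplus_moved_less:
  assumes "\<forall>j\<in>{1..<m - 1}. K j \<le> K (j + 1)" and "2 \<le> m" and "K (m - 1) < n"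
    and "l (K (m - 1) + 1) (m - 1) \<le> u (K (m - 1) + 1) (m - 1)"
    and "u (K (m - 1) + 1) (m - 1) < l (K (m - 1) + 1) m"
    and "l (K (m - 1) + 1) m \<le> u (K (m - 1) + 1) m"
  shows "xK l u b n m (Kplus m K) lam' (K (m - 1) + 1) < xK l u b n m K lam (K (m - 1) + 1)"
proof -
  have "xK l u b n m (Kplus m K) lam' (K (m - 1) + 1) \<le> u (K (m - 1) + 1) (m - 1)"
    by (rule xK_le_upper[OF jK_Kplus_last[OF assms(1-3)]]) (fact assms(4))
  also have "\<dots> < l (K (m - 1) + 1) m" by (fact assms(5))
  also have "\<dots> \<le> xK l u b n m K lam (K (m - 1) + 1)"
    by (rule xK_ge_lower[OF jK_last[OF assms(1-3)]]) (fact assms(6))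
  finally show ?thesis .
qed

lemma zK_Kplus_less:
  assumes "\<forall>i\<in>{1..n}. \<forall>j\<in>{1..m}. l i j \<le> u i j"
    and "\<forall>i\<in>{1..n}. \<forall>j\<in>{1..<m}. u i j < l i (j + 1)"
    and "\<forall>j\<in>{1..<m - 1}. K j \<le> K (j + 1)" and "2 \<le> m" and "K (m - 1) < n"
    and "lam' \<le> lam"
  shows "zK l u b n m (Kplus m K) lam' < zK l u b n m K lam"
proof -
  define i0 where "i0 = K (m - 1) + 1"
  have i0: "i0 \<in> {1..n}" using assms(5) by (simp add: i0_def)
  have "m - 1 \<in> {1..<m}" using assms(4) by simp
  with assms(2) i0 have "u i0 (m - 1) < l i0 (m - 1 + 1)" by blast
  with assms(1,4) i0 have moved: "xK l u b n m (Kplus m K) lam' i0 < xK l u b n m K lam i0"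
    unfolding i0_def by (intro xK_Kplus_moved_less assms(3-5)) auto
  have mono: "mono_on {0..m} (Kext n m K)" using mono_on_Kext assms(3,5) by simp
  have unmoved: "xK l u b n m (Kplus m K) lam' i \<le> xK l u b n m K lam i"
    if "i \<in> {1..n}" "i \<noteq> i0" for i
  proof -
    have "jK n m K i \<in> {1..m}" using jK_mem[OF mono] assms(4) that(1) by simp
    with assms(1) that(1) have "l i (jK n m K i) \<le> u i (jK n m K i)" by blast
    then have "xK l u b n m K lam' i \<le> xK l u b n m K lam i" by (rule xK_mono[OF refl _ assms(6)])
    with xK_Kplus_eq that(2) show ?thesis by (simp add: i0_def)
  qed
  show ?thesis
    unfolding zK_def
  proof (rule sum_strict_mono_ex1)
    show "\<forall>i\<in>{1..n}. xK l u b n m (Kplus m K) lam' i \<le> xK l u b n m K lam i"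
      using moved unmoved by (metis less_imp_le)
  qed (use i0 moved in auto)
qed

theorem lemma4:
  fixes n m :: nat and R :: real and b :: "nat \<Rightarrow> real"
    and l u :: "nat \<Rightarrow> nat \<Rightarrow> real" and K :: "nat \<Rightarrow> nat"
    and lamK lamKp :: real
  assumes "n \<ge> 1" and "m \<ge> 2"
    and "\<forall>i\<in>{1..n}. \<forall>j\<in>{1..m}. l i j \<le> u i j"
    and "\<forall>i\<in>{1..n}. \<forall>j\<in>{1..<m}. u i j < l i (j + 1)"
    and "\<forall>j\<in>{1..<m - 1}. K j \<le> K (j + 1)"
    and "K (m - 1) < n"
    and "zK l u b n m K lamK = R"
    and "zK l u b n m (Kplus m K) lamKp = R"
  shows "lamKp > lamK"
proof (rule ccontr)
  assume "\<not> lamKp > lamK"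
  then have "zK l u b n m (Kplus m K) lamKp < zK l u b n m K lamK"
    by (intro zK_Kplus_less) (use assms in auto)
  with assms(7,8) show False by simp
qed

end
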